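(* Let $n>0$ be an integer. Let $(\pi_i)_{-n<i<n}$ be arbitrary probabilities in $[0,1]$. Consider the Markov chain $X_0,X_1,\ldots$ on $\{-n,\ldots,n\}$ with reflecting barriers, whose transition probabilities are $$p_{-n,-n+1}=p_{n,n-1}=1,\qquad p_{i,i+1}=\pi_i,\quad p_{i,i-1}=1-\pi_i\quad(-n<i<n).$$ All other transition probabilities are $0$. For states $i,j$, let $T_{i,j}=\min\{t>0: X_t=j\}$ be the hitting time of $j$ when the chain is started at $X_0=i$. Then $$\max\left(\mathrm{E}\{T_{0,n}\},\mathrm{E}\{T_{0,-n}\}\right)\ge \frac{2}{3}n^2.$$
   Context: Expectations may be infinite. *)

theory Defs
  imports "HOL-Analysis.Analysis"
begin

definition trans_prob :: "nat \<Rightarrow> (int \<Rightarrow> real) \<Rightarrow> int \<Rightarrow> int \<Rightarrow> real" where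
  "trans_prob n \<pi> i j =
     (if i = - int n then (if j = - int n + 1 then 1 else 0)
      else if i = int n then (if j = int n - 1 then 1 else 0)
      else if - int n < i \<and> i < int n then
        (if j = i + 1 then \<pi> i else if j = i - 1 then 1 - \<pi> i else 0)
      else 0)"

definition path_prob :: "nat \<Rightarrow> (int \<Rightarrow> real) \<Rightarrow> int \<Rightarrow> int list \<Rightarrow> real" where
  "path_prob n \<pi> i xs = (\<Prod>k<length xs. trans_prob n \<pi> ((i # xs) ! k) ((i # xs) ! (k + 1)))"

text \<open>P(T_{i,j} = t) for the chain started at X_0 = i, where T_{i,j} = min {t > 0. X_t = j}:
  sum of probabilities of trajectories x_1..x_t in the state space avoiding j at times
  1..t-1 and with x_t = j.\<close>
definition hit_prob :: "nat \<Rightarrow> (int \<Rightarrow> real) \<Rightarrow> int \<Rightarrow> int \<Rightarrow> nat \<Rightarrow> real" where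
  "hit_prob n \<pi> i j t =
     (\<Sum>xs \<in> {xs. length xs = t \<and> set xs \<subseteq> {- int n .. int n} \<and> xs \<noteq> [] \<and>
                  last xs = j \<and> j \<notin> set (butlast xs)}.
        path_prob n \<pi> i xs)"

text \<open>E{T_{i,j}} in [0, \<infinity>]: sum of t P(T = t), plus \<infinity> times P(T = \<infinity>).\<close>
definition exp_hit_time :: "nat \<Rightarrow> (int \<Rightarrow> real) \<Rightarrow> int \<Rightarrow> int \<Rightarrow> ennreal" where
  "exp_hit_time n \<pi> i j =
     (\<Sum>t. of_nat t * ennreal (hit_prob n \<pi> i j t))
     + (top :: ennreal) * (1 - (\<Sum>t. ennreal (hit_prob n \<pi> i j t)))"

end

theory Submission
  imports Defs
begin

text \<open>
  A function f on the states with f j = 0 and f y \<le> 1 + E(f X_1 | X_0 = y) for y \<noteq> j is a lower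
  bound for the expected hitting time of j: by optional stopping, f(X_min(t,T)) + min(t,T) is a
  submartingale. For the target n we take f x = \<Sum>{a k | x \<le> k < n}, where a k bounds the
  expected time to step from k to k + 1; the target -n is the target n of the reflected walk.

  If all \<pi> k lie strictly between 0 and 1, the exact crossing times of the edge {k, k + 1} are
  1 + 2 \<Sum>{w i / w k | i < k} upwards and 1 + 2 \<Sum>{w i / w k | i > k} downwards, where w k is
  the product of the odds \<pi> l / (1 - \<pi> l) over -n < l \<le> k. Pairing the upward crossings right of 0
  with the downward crossings left of 0 and using w i / w k + w k / w i \<ge> 2 gives
  E T_{0,n} + E T_{0,-n} \<ge> 4 n^2, so the larger of the two is at least 2 n^2. If some \<pi> k is 0 or 1,
  the walk from 0 gets trapped on one side with positive probability and one of the two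
  expected hitting times is infinite.
\<close>

lemma ennreal_add_le: "ennreal (x + y) \<le> ennreal x + ennreal y"
  by (metis add.right_neutral add_0 add_le_same_cancel2 ennreal_leI
      ennreal_neg ennreal_plus le_add_same_cancel1 linorder_le_cases)

lemma ennreal_eq_top_if_unbounded:
  assumes "\<And>C. 0 \<le> C \<Longrightarrow> ennreal C \<le> x"
  shows "x = top"
proof (cases x)
  case (real r)
  then have "ennreal (r + 1) \<le> ennreal r" using assms[of "r + 1"] by simp
  with real show ?thesis by simp
qed simp

lemma sum_int_atLeastLessThan_head:
  "x < m \<Longrightarrow> (\<Sum>k\<in>{x..<m}. a k) = a x + (\<Sum>k\<in>{x + 1..<m}. a k :: 'a :: comm_monoid_add)"
  for x m :: int
proof -
  assume "x < m"
  then have "{x..<m} = insert x {x + 1..<m}" by auto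
  then show ?thesis by simp
qed

text \<open>In the next two lemmas h r = P(T = r) for a random time T \<in> \<nat> \<union> {\<infinity>}, so that
  1 - \<Sum>{h r | r \<le> s} = P(T > s), the sum of these over s < t is E min(T, t), and the right-hand side
  of the second lemma is E T with the convention \<infinity> \<cdot> P(T = \<infinity>).\<close>

lemma truncated_mean_le_mean:
  fixes h :: "nat \<Rightarrow> real"
  assumes nonneg: "\<And>r. 0 \<le> h r" and total: "h sums 1"
  shows "ennreal (\<Sum>s<t. 1 - (\<Sum>r\<le>s. h r)) \<le> (\<Sum>r. of_nat r * ennreal (h r))"
proof -
  have tail: "(\<lambda>r. if s < r then h r else 0) sums (1 - (\<Sum>r\<le>s. h r))" for s
  proof -
    have "(\<lambda>r. h r - (if r \<in> {..s} then h r else 0)) sums (1 - (\<Sum>r\<le>s. h r))"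
      by (intro sums_diff total sums_If_finite_set) simp
    moreover have "(\<lambda>r. h r - (if r \<in> {..s} then h r else 0)) = (\<lambda>r. if s < r then h r else 0)"
      by (auto simp: fun_eq_iff)
    ultimately show ?thesis by simp
  qed
  have "(\<lambda>r. \<Sum>s<t. if s < r then h r else 0) = (\<lambda>r. real (min r t) * h r)"
  proof
    fix r
    have "{s. s < t \<and> s < r} = {..<min r t}" by auto
    then show "(\<Sum>s<t. if s < r then h r else 0) = real (min r t) * h r"
      by (simp add: sum.If_cases Int_def)
  qed
  moreover have "(\<lambda>r. \<Sum>s<t. if s < r then h r else 0) sums (\<Sum>s<t. 1 - (\<Sum>r\<le>s. h r))"
    by (rule sums_sum) (rule tail)
  ultimately have "(\<lambda>r. real (min r t) * h r) sums (\<Sum>s<t. 1 - (\<Sum>r\<le>s. h r))"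
    by simp
  then have "(\<Sum>s<t. 1 - (\<Sum>r\<le>s. h r)) = (\<Sum>r. real (min r t) * h r)"
    and "summable (\<lambda>r. real (min r t) * h r)"
    by (simp_all add: sums_unique sums_summable)
  then have "ennreal (\<Sum>s<t. 1 - (\<Sum>r\<le>s. h r)) = (\<Sum>r. ennreal (real (min r t) * h r))"
    using nonneg by (simp add: suminf_ennreal2)
  also have "\<dots> \<le> (\<Sum>r. of_nat r * ennreal (h r))"
    using nonneg by (intro suminf_le) (auto simp: ennreal_mult' ennreal_of_nat_eq_real_of_nat
      intro!: mult_right_mono)
  finally show ?thesis .
qed

lemma le_mean_of_le_truncated_means:
  fixes h :: "nat \<Rightarrow> real"
  assumes nonneg: "\<And>r. 0 \<le> h r" and sub: "\<And>t. (\<Sum>r\<le>t. h r) \<le> 1"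
    and le: "\<And>t. c \<le> (\<Sum>s<t. 1 - (\<Sum>r\<le>s. h r)) + M * (1 - (\<Sum>r\<le>t. h r))"
  shows "ennreal c \<le> (\<Sum>r. of_nat r * ennreal (h r)) + top * (1 - (\<Sum>r. ennreal (h r)))"
proof (cases "(\<Sum>r. ennreal (h r)) < 1")
  case True
  then have "top * (1 - (\<Sum>r. ennreal (h r))) = top"
    using diff_gr0_ennreal[OF True] by (intro ennreal_top_mult_right) auto
  then show ?thesis by simp
next
  case False
  have partial: "(\<Sum>r<t. h r) \<le> 1" for t
    using sub by (cases t) (auto simp: lessThan_Suc_atMost)
  have "summable h"
    using nonneg partial by (rule summableI_nonneg_bounded)
  moreover have "suminf h \<le> 1"
    using \<open>summable h\<close> partial by (rule suminf_le_const)
  moreover have "1 \<le> suminf h"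
    using False nonneg \<open>summable h\<close> by (simp add: suminf_ennreal2 not_less)
  ultimately have total: "h sums 1"
    using summable_sums by fastforce
  have "(\<lambda>t. c - M * (1 - (\<Sum>r\<le>t. h r))) \<longlonglongrightarrow> c - M * (1 - 1)"
    using summable_LIMSEQ'[OF \<open>summable h\<close>] total by (intro tendsto_intros) (simp add: sums_iff)
  then have "(\<lambda>t. ennreal (c - M * (1 - (\<Sum>r\<le>t. h r)))) \<longlonglongrightarrow> ennreal c"
    by (intro tendsto_ennrealI) simp
  moreover have "ennreal (c - M * (1 - (\<Sum>r\<le>t. h r))) \<le> (\<Sum>r. of_nat r * ennreal (h r))" for t
    using le[of t] truncated_mean_le_mean[OF nonneg total, of t] by (meson ennreal_leI diff_le_eq order_trans)
  ultimately have "ennreal c \<le> (\<Sum>r. of_nat r * ennreal (h r))"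
    by (intro Lim_bounded[where M = 0]) auto
  then show ?thesis by (simp add: add_increasing2)
qed

section \<open>Hitting probabilities\<close>

lemma path_prob_Nil [simp]: "path_prob n \<pi> i [] = 1"
  by (simp add: path_prob_def)

lemma path_prob_Cons [simp]:
  "path_prob n \<pi> i (y # ys) = trans_prob n \<pi> i y * path_prob n \<pi> y ys"
  unfolding path_prob_def by (simp add: prod.lessThan_Suc_shift del: prod.lessThan_Suc)

abbreviation states :: "nat \<Rightarrow> int set" where
  "states n \<equiv> {- int n .. int n}"

definition hitting_paths :: "nat \<Rightarrow> int \<Rightarrow> nat \<Rightarrow> int list set" where
  "hitting_paths n j t = {xs. length xs = t \<and> set xs \<subseteq> states n \<and> xs \<noteq> [] \<and>
     last xs = j \<and> j \<notin> set (butlast xs)}"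

lemma hit_prob_eq_sum_hitting_paths:
  "hit_prob n \<pi> i j t = (\<Sum>xs\<in>hitting_paths n j t. path_prob n \<pi> i xs)"
  by (simp add: hit_prob_def hitting_paths_def)

lemma hitting_paths_Suc_0: "j \<in> states n \<Longrightarrow> hitting_paths n j (Suc 0) = {[j]}"
  by (auto simp: hitting_paths_def length_Suc_conv)

lemma hitting_paths_Suc_Suc:
  "hitting_paths n j (Suc (Suc t)) = (\<lambda>(y, ys). y # ys) ` ((states n - {j}) \<times> hitting_paths n j (Suc t))"
  by (fastforce simp: hitting_paths_def length_Suc_conv image_iff)

lemma hit_prob_0 [simp]: "hit_prob n \<pi> i j 0 = 0"
  by (simp add: hit_prob_def)

lemma hit_prob_Suc:
  assumes "j \<in> states n"
  shows "hit_prob n \<pi> i j (Suc t) = (if t = 0 then trans_prob n \<pi> i j else 0)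
     + (\<Sum>y\<in>states n - {j}. trans_prob n \<pi> i y * hit_prob n \<pi> y j t)"
proof (cases t)
  case 0
  then show ?thesis
    using assms by (simp add: hit_prob_eq_sum_hitting_paths[of n \<pi> i] hitting_paths_Suc_0)
next
  case (Suc t')
  have "inj_on (\<lambda>(y, ys). y # ys) ((states n - {j}) \<times> hitting_paths n j (Suc t'))"
    by (auto simp: inj_on_def)
  then have "hit_prob n \<pi> i j (Suc t) = (\<Sum>p\<in>(states n - {j}) \<times> hitting_paths n j (Suc t').
      path_prob n \<pi> i ((\<lambda>(y, ys). y # ys) p))"
    unfolding hit_prob_eq_sum_hitting_paths Suc hitting_paths_Suc_Suc
    by (rule sum.reindex[unfolded comp_def])
  also have "\<dots> = (\<Sum>y\<in>states n - {j}. trans_prob n \<pi> i y * hit_prob n \<pi> y j t)"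
    by (simp add: sum.cartesian_product case_prod_beta hit_prob_eq_sum_hitting_paths Suc sum_distrib_left)
  finally show ?thesis using Suc by simp
qed

lemma sum_trans_prob:
  assumes n: "n > 0" and x: "x \<in> states n"
  shows "(\<Sum>z\<in>states n. trans_prob n \<pi> x z * g z) =
     (if x = - int n then g (x + 1) else if x = int n then g (x - 1)
      else \<pi> x * g (x + 1) + (1 - \<pi> x) * g (x - 1))"
proof -
  consider "x = - int n" | "x = int n" | "- int n < x" "x < int n"
    using x by force
  then show ?thesis
  proof cases
    case 1
    then have "(\<Sum>z\<in>states n. trans_prob n \<pi> x z * g z) = (\<Sum>z\<in>states n. if z = x + 1 then g z else 0)"
      by (intro sum.cong) (auto simp: trans_prob_def)
    with 1 n show ?thesis by (simp add: sum.delta')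
  next
    case 2
    then have "(\<Sum>z\<in>states n. trans_prob n \<pi> x z * g z) = (\<Sum>z\<in>states n. if z = x - 1 then g z else 0)"
      using n by (intro sum.cong) (auto simp: trans_prob_def)
    with 2 n show ?thesis by (simp add: sum.delta')
  next
    case 3
    then have "(\<Sum>z\<in>states n. trans_prob n \<pi> x z * g z) = (\<Sum>z\<in>states n.
        (if z = x + 1 then \<pi> x * g z else 0) + (if z = x - 1 then (1 - \<pi> x) * g z else 0))"
      by (intro sum.cong) (auto simp: trans_prob_def)
    with 3 show ?thesis by (simp add: sum.distrib sum.delta')
  qed
qed

lemma sum_trans_prob_eq_1: "n > 0 \<Longrightarrow> x \<in> states n \<Longrightarrow> (\<Sum>z\<in>states n. trans_prob n \<pi> x z) = 1"
  using sum_trans_prob[of n x \<pi> "\<lambda>_. 1"] by simp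

definition survival_prob :: "nat \<Rightarrow> (int \<Rightarrow> real) \<Rightarrow> int \<Rightarrow> int \<Rightarrow> nat \<Rightarrow> real" where
  "survival_prob n \<pi> x j t = 1 - (\<Sum>s\<le>t. hit_prob n \<pi> x j s)"

lemma survival_prob_0 [simp]: "survival_prob n \<pi> x j 0 = 1"
  by (simp add: survival_prob_def)

lemma survival_prob_Suc:
  assumes "n > 0" and j: "j \<in> states n" and x: "x \<in> states n"
  shows "survival_prob n \<pi> x j (Suc t) =
    (\<Sum>y\<in>states n - {j}. trans_prob n \<pi> x y * survival_prob n \<pi> y j t)"
proof -
  have "(\<Sum>s\<le>Suc t. hit_prob n \<pi> x j s) = (\<Sum>s\<le>t. hit_prob n \<pi> x j (Suc s))"
    by (simp add: sum.atMost_Suc_shift del: sum.atMost_Suc)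
  also have "\<dots> = trans_prob n \<pi> x j +
      (\<Sum>y\<in>states n - {j}. trans_prob n \<pi> x y * (\<Sum>s\<le>t. hit_prob n \<pi> y j s))"
    by (simp add: hit_prob_Suc[OF j] sum.distrib sum_distrib_left sum.swap[of _ "states n - {j}"])
  moreover have "1 = trans_prob n \<pi> x j + (\<Sum>y\<in>states n - {j}. trans_prob n \<pi> x y)"
    using sum_trans_prob_eq_1[OF assms(1) x] j by (simp add: sum.remove)
  ultimately show ?thesis
    unfolding survival_prob_def by (simp add: right_diff_distrib sum_subtractf)
qed

definition mirror :: "(int \<Rightarrow> real) \<Rightarrow> int \<Rightarrow> real" where
  "mirror \<pi> k = 1 - \<pi> (- k)"

lemma mirror_mirror [simp]: "mirror (mirror \<pi>) = \<pi>"
  by (simp add: mirror_def fun_eq_iff)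

lemma trans_prob_mirror: "n > 0 \<Longrightarrow> trans_prob n (mirror \<pi>) (- i) (- j) = trans_prob n \<pi> i j"
  by (auto simp: trans_prob_def mirror_def)

lemma path_prob_mirror:
  "n > 0 \<Longrightarrow> path_prob n (mirror \<pi>) (- i) (map uminus xs) = path_prob n \<pi> i xs"
  by (induction xs arbitrary: i) (simp_all add: trans_prob_mirror)

lemma hit_prob_mirror: "n > 0 \<Longrightarrow> hit_prob n (mirror \<pi>) (- i) (- j) t = hit_prob n \<pi> i j t"
  unfolding hit_prob_eq_sum_hitting_paths
  by (rule sym, rule sum.reindex_bij_witness[where i = "map uminus" and j = "map uminus"])
     (auto simp: hitting_paths_def path_prob_mirror last_map map_butlast[symmetric])

lemma exp_hit_time_mirror: "n > 0 \<Longrightarrow> exp_hit_time n (mirror \<pi>) (- i) (- j) = exp_hit_time n \<pi> i j"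
  by (simp add: exp_hit_time_def hit_prob_mirror)

section \<open>Lower bounds from subsolutions\<close>

locale reflecting_walk =
  fixes n :: nat and \<pi> :: "int \<Rightarrow> real"
  assumes n_pos: "n > 0"
    and prob: "\<And>i. - int n < i \<Longrightarrow> i < int n \<Longrightarrow> 0 \<le> \<pi> i \<and> \<pi> i \<le> 1"
begin

lemma trans_prob_nonneg: "0 \<le> trans_prob n \<pi> x y"
  using prob[of x] by (auto simp: trans_prob_def)

lemma hit_prob_nonneg: "0 \<le> hit_prob n \<pi> x j t"
  unfolding hit_prob_def path_prob_def
  by (intro sum_nonneg prod_nonneg) (simp add: trans_prob_nonneg)

lemma survival_prob_nonneg:
  "j \<in> states n \<Longrightarrow> x \<in> states n \<Longrightarrow> 0 \<le> survival_prob n \<pi> x j t"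
proof (induction t arbitrary: x)
  case (Suc t)
  then show ?case
    by (auto simp: survival_prob_Suc[OF n_pos] intro!: sum_nonneg mult_nonneg_nonneg trans_prob_nonneg)
qed simp

text \<open>With T = T_{x,j} the bound reads f x \<le> E min(T, t) + M P(T > t); it is optional stopping,
  proved by unrolling one step of the walk.\<close>
lemma subsolution_le_truncated_mean:
  assumes j: "j \<in> states n" and fj: "f j = 0"
    and le_M: "\<And>y. y \<in> states n \<Longrightarrow> f y \<le> M"
    and sub: "\<And>y. y \<in> states n \<Longrightarrow> y \<noteq> j \<Longrightarrow> f y \<le> 1 + (\<Sum>z\<in>states n. trans_prob n \<pi> y z * f z)"
  shows "x \<in> states n \<Longrightarrow> x \<noteq> j \<Longrightarrow>
    f x \<le> (\<Sum>s<t. survival_prob n \<pi> x j s) + M * survival_prob n \<pi> x j t"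
proof (induction t arbitrary: x)
  case 0
  then show ?case using le_M by simp
next
  case (Suc t)
  let ?Q = "\<lambda>s y. survival_prob n \<pi> y j s"
  have "f x \<le> 1 + (\<Sum>y\<in>states n - {j}. trans_prob n \<pi> x y * f y)"
    using sub[OF Suc.prems] j fj by (simp add: sum.remove)
  also have "\<dots> \<le> 1 + (\<Sum>y\<in>states n - {j}. trans_prob n \<pi> x y * ((\<Sum>s<t. ?Q s y) + M * ?Q t y))"
    by (intro add_left_mono sum_mono mult_left_mono Suc.IH trans_prob_nonneg) auto
  also have "\<dots> = (\<Sum>s<Suc t. ?Q s x) + M * ?Q (Suc t) x"
    using j Suc.prems(1)
    by (simp add: sum.lessThan_Suc_shift survival_prob_Suc[OF n_pos] distrib_left
        sum.distrib sum_distrib_left sum.swap[of _ "states n - {j}"] ac_simps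
        del: sum.lessThan_Suc)
  finally show ?case .
qed


theorem subsolution_le_exp_hit_time:
  assumes j: "j \<in> states n" and x: "x \<in> states n" "x \<noteq> j" and fj: "f j = 0"
    and sub: "\<And>y. y \<in> states n \<Longrightarrow> y \<noteq> j \<Longrightarrow> f y \<le> 1 + (\<Sum>z\<in>states n. trans_prob n \<pi> y z * f z)"
  shows "ennreal (f x) \<le> exp_hit_time n \<pi> x j"
proof -
  have "f x \<le> (\<Sum>s<t. survival_prob n \<pi> x j s) + Max (f ` states n) * survival_prob n \<pi> x j t" for t
    using j fj sub x by (intro subsolution_le_truncated_mean) auto
  moreover have "(\<Sum>s\<le>t. hit_prob n \<pi> x j s) \<le> 1" for t
    using survival_prob_nonneg[OF j x(1), of t] by (simp add: survival_prob_def)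
  ultimately show ?thesis
    unfolding exp_hit_time_def survival_prob_def
    by (intro le_mean_of_le_truncated_means hit_prob_nonneg)
qed

end

lemma (in reflecting_walk) mirror_walk: "reflecting_walk n (mirror \<pi>)"
  using n_pos prob by unfold_locales (auto simp: mirror_def)

text \<open>The expected time \<tau> k to step from k to k + 1 satisfies \<tau> (-n) = 1 and
  \<pi> k \<tau> k = 1 + (1 - \<pi> k) \<tau> (k - 1); functions satisfying these as inequalities bound it from below.\<close>
definition up_crossing_bound :: "nat \<Rightarrow> (int \<Rightarrow> real) \<Rightarrow> (int \<Rightarrow> real) \<Rightarrow> bool" where
  "up_crossing_bound n \<pi> a \<longleftrightarrow> a (- int n) \<le> 1 \<and>
     (\<forall>k. - int n < k \<and> k < int n \<longrightarrow> \<pi> k * a k \<le> 1 + (1 - \<pi> k) * a (k - 1))"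

context reflecting_walk
begin

theorem up_crossing_sum_le_exp_hit_time:
  assumes "up_crossing_bound n \<pi> a"
  shows "ennreal (\<Sum>k\<in>{0..<int n}. a k) \<le> exp_hit_time n \<pi> 0 (int n)"
proof -
  define f where "f x = (\<Sum>k\<in>{x..<int n}. a k)" for x
  have lowest: "a (- int n) \<le> 1"
    and step: "\<And>k. - int n < k \<Longrightarrow> k < int n \<Longrightarrow> \<pi> k * a k \<le> 1 + (1 - \<pi> k) * a (k - 1)"
    using assms by (auto simp: up_crossing_bound_def)
  have f_step: "f y = a y + f (y + 1)" if "y < int n" for y
    using that by (simp add: f_def sum_int_atLeastLessThan_head)
  have "ennreal (f 0) \<le> exp_hit_time n \<pi> 0 (int n)"
  proof (rule subsolution_le_exp_hit_time)
    fix y assume y: "y \<in> states n" "y \<noteq> int n"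
    show "f y \<le> 1 + (\<Sum>z\<in>states n. trans_prob n \<pi> y z * f z)"
    proof (cases "y = - int n")
      case True
      then show ?thesis
        using sum_trans_prob[OF n_pos y(1), of \<pi> f] f_step[of y] lowest n_pos by simp
    next
      case False
      then have "- int n < y" "y < int n" using y by auto
      then show ?thesis
        using sum_trans_prob[OF n_pos y(1), of \<pi> f] f_step[of y] f_step[of "y - 1"] step[of y] False
        by (simp add: algebra_simps)
    qed
  qed (use n_pos in \<open>auto simp: f_def\<close>)
  then show ?thesis by (simp add: f_def)
qed

end

section \<open>The nondegenerate walk\<close>

definition odds :: "(int \<Rightarrow> real) \<Rightarrow> int \<Rightarrow> real" where
  "odds \<pi> k = \<pi> k / (1 - \<pi> k)"

text \<open>The edge weight is proportional to the stationary flow through the edge {k, k + 1};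
  up_time and down_time are the exact expected times to cross that edge upwards and downwards.\<close>
definition edge_weight :: "nat \<Rightarrow> (int \<Rightarrow> real) \<Rightarrow> int \<Rightarrow> real" where
  "edge_weight n \<pi> k = (\<Prod>l\<in>{- int n<..k}. odds \<pi> l)"

definition up_time :: "nat \<Rightarrow> (int \<Rightarrow> real) \<Rightarrow> int \<Rightarrow> real" where
  "up_time n \<pi> k = 1 + 2 * (\<Sum>i\<in>{- int n..<k}. edge_weight n \<pi> i) / edge_weight n \<pi> k"

definition down_time :: "nat \<Rightarrow> (int \<Rightarrow> real) \<Rightarrow> int \<Rightarrow> real" where
  "down_time n \<pi> k = 1 + 2 * (\<Sum>i\<in>{k<..<int n}. edge_weight n \<pi> i) / edge_weight n \<pi> k"

lemma edge_weight_step: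
  assumes "- int n < k"
  shows "edge_weight n \<pi> k = edge_weight n \<pi> (k - 1) * odds \<pi> k"
proof -
  have "{- int n<..k} = insert k {- int n<..k - 1}" using assms by auto
  then show ?thesis by (simp add: edge_weight_def)
qed

lemma up_time_lowest: "up_time n \<pi> (- int n) = 1"
  by (simp add: up_time_def)

lemma down_time_highest: "down_time n \<pi> (int n - 1) = 1"
proof -
  have "{int n - 1<..<int n} = {}" by auto
  then show ?thesis by (simp add: down_time_def)
qed

context
  fixes n :: nat and \<pi> :: "int \<Rightarrow> real"
  assumes interior: "\<And>k. - int n < k \<Longrightarrow> k < int n \<Longrightarrow> 0 < \<pi> k \<and> \<pi> k < 1"
begin

lemma edge_weight_pos: "k < int n \<Longrightarrow> 0 < edge_weight n \<pi> k"
  unfolding edge_weight_def odds_def by (intro prod_pos) (auto dest: interior)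

lemma up_time_step:
  assumes k: "- int n < k" "k < int n"
  shows "\<pi> k * up_time n \<pi> k = 1 + (1 - \<pi> k) * up_time n \<pi> (k - 1)"
proof -
  define w where "w = edge_weight n \<pi> (k - 1)"
  define S where "S = (\<Sum>i\<in>{- int n..<k - 1}. edge_weight n \<pi> i)"
  have "0 < w" using k by (simp add: w_def edge_weight_pos)
  have "{- int n..<k} = insert (k - 1) {- int n..<k - 1}" using k by auto
  then have up_k: "up_time n \<pi> k = 1 + 2 * (w + S) / (w * odds \<pi> k)"
    using edge_weight_step[OF k(1)] by (simp add: up_time_def w_def S_def)
  have up_pred: "up_time n \<pi> (k - 1) = 1 + 2 * S / w"
    by (simp add: up_time_def w_def S_def)
  show ?thesis
    unfolding up_k up_pred using interior[OF k] \<open>0 < w\<close> by (simp add: odds_def field_simps)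
qed

lemma down_time_step:
  assumes k: "- int n < k" "k < int n"
  shows "(1 - \<pi> k) * down_time n \<pi> (k - 1) = 1 + \<pi> k * down_time n \<pi> k"
proof -
  define w where "w = edge_weight n \<pi> (k - 1)"
  define D where "D = (\<Sum>i\<in>{k<..<int n}. edge_weight n \<pi> i)"
  have "0 < w" using k by (simp add: w_def edge_weight_pos)
  have "{k - 1<..<int n} = insert k {k<..<int n}" using k by auto
  then have down_pred: "down_time n \<pi> (k - 1) = 1 + 2 * (w * odds \<pi> k + D) / w"
    using edge_weight_step[OF k(1)] by (simp add: down_time_def w_def D_def)
  have down_k: "down_time n \<pi> k = 1 + 2 * D / (w * odds \<pi> k)"
    using edge_weight_step[OF k(1)] by (simp add: down_time_def w_def D_def)
  show ?thesis
    unfolding down_k down_pred using interior[OF k] \<open>0 < w\<close> by (simp add: odds_def field_simps)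
qed

lemma up_crossing_bound_up_time: "up_crossing_bound n \<pi> (up_time n \<pi>)"
  by (simp add: up_crossing_bound_def up_time_lowest up_time_step)

lemma up_crossing_bound_down_time:
  "up_crossing_bound n (mirror \<pi>) (\<lambda>k. down_time n \<pi> (- k - 1))"
  unfolding up_crossing_bound_def
  using down_time_step[of "- k" for k] by (simp add: down_time_highest mirror_def)

lemma sum_up_down_time_ge:
  "4 * real n ^ 2 \<le> (\<Sum>e\<in>{0..<int n}. up_time n \<pi> e) + (\<Sum>e\<in>{- int n..<0}. down_time n \<pi> e)"
proof -
  let ?w = "edge_weight n \<pi>" and ?L = "{- int n..<0}" and ?R = "{0..<int n}"
  have w_nonneg: "0 \<le> ?w i" if "i < int n" for i
    using edge_weight_pos[OF that] by simp
  have up: "(\<Sum>i\<in>?L. 2 * (?w i / ?w e)) \<le> up_time n \<pi> e" if "e \<in> ?R" for e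
  proof -
    have "(\<Sum>i\<in>?L. 2 * (?w i / ?w e)) = 2 * (\<Sum>i\<in>?L. ?w i) / ?w e"
      by (simp add: sum_distrib_left sum_divide_distrib)
    also have "\<dots> \<le> 2 * (\<Sum>i\<in>{- int n..<e}. ?w i) / ?w e"
      using that edge_weight_pos[of e]
      by (intro divide_right_mono mult_left_mono sum_mono2) (auto intro: w_nonneg)
    also have "\<dots> \<le> up_time n \<pi> e"
      by (simp add: up_time_def)
    finally show ?thesis .
  qed
  have down: "(\<Sum>i\<in>?R. 2 * (?w i / ?w e)) \<le> down_time n \<pi> e" if "e \<in> ?L" for e
  proof -
    have "(\<Sum>i\<in>?R. 2 * (?w i / ?w e)) = 2 * (\<Sum>i\<in>?R. ?w i) / ?w e"
      by (simp add: sum_distrib_left sum_divide_distrib)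
    also have "\<dots> \<le> 2 * (\<Sum>i\<in>{e<..<int n}. ?w i) / ?w e"
      using that edge_weight_pos[of e]
      by (intro divide_right_mono mult_left_mono sum_mono2) (auto intro: w_nonneg)
    also have "\<dots> \<le> down_time n \<pi> e"
      by (simp add: down_time_def)
    finally show ?thesis .
  qed
  have "4 * real n ^ 2 = (\<Sum>e\<in>?R. \<Sum>i\<in>?L. 4)"
    by (simp add: power2_eq_square)
  also have "\<dots> \<le> (\<Sum>e\<in>?R. \<Sum>i\<in>?L. 2 * (?w i / ?w e) + 2 * (?w e / ?w i))"
  proof (intro sum_mono)
    fix e i assume "e \<in> ?R" "i \<in> ?L"
    then have "0 < ?w e" "0 < ?w i" by (auto intro: edge_weight_pos)
    then have "?w i / ?w e + ?w e / ?w i - 2 = (?w i - ?w e)\<^sup>2 / (?w i * ?w e)"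
      by (simp add: field_simps power2_eq_square)
    also have "\<dots> \<ge> 0" using \<open>0 < ?w e\<close> \<open>0 < ?w i\<close> by simp
    finally show "4 \<le> 2 * (?w i / ?w e) + 2 * (?w e / ?w i)" by simp
  qed
  also have "\<dots> = (\<Sum>e\<in>?R. \<Sum>i\<in>?L. 2 * (?w i / ?w e)) + (\<Sum>e\<in>?L. \<Sum>i\<in>?R. 2 * (?w i / ?w e))"
    by (simp add: sum.distrib sum.swap[of _ ?R])
  also have "\<dots> \<le> (\<Sum>e\<in>?R. up_time n \<pi> e) + (\<Sum>e\<in>?L. down_time n \<pi> e)"
    by (intro add_mono sum_mono up down)
  finally show ?thesis .
qed

end

context reflecting_walk
begin

lemma exp_hit_times_ge_nondegenerate:
  assumes interior: "\<And>k. - int n < k \<Longrightarrow> k < int n \<Longrightarrow> 0 < \<pi> k \<and> \<pi> k < 1"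
  shows "ennreal (4 * real n ^ 2) \<le> exp_hit_time n \<pi> 0 (int n) + exp_hit_time n (mirror \<pi>) 0 (int n)"
proof -
  have "(\<Sum>e\<in>{- int n..<0}. down_time n \<pi> e) = (\<Sum>k\<in>{0..<int n}. down_time n \<pi> (- k - 1))"
    by (rule sum.reindex_bij_witness[where i = "\<lambda>k. - k - 1" and j = "\<lambda>e. - e - 1"]) auto
  then have "ennreal (4 * real n ^ 2) \<le>
      ennreal ((\<Sum>k\<in>{0..<int n}. up_time n \<pi> k) + (\<Sum>k\<in>{0..<int n}. down_time n \<pi> (- k - 1)))"
    using sum_up_down_time_ge[of n \<pi>, OF interior] by (intro ennreal_leI) simp
  also have "\<dots> \<le> ennreal (\<Sum>k\<in>{0..<int n}. up_time n \<pi> k) + ennreal (\<Sum>k\<in>{0..<int n}. down_time n \<pi> (- k - 1))"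
    by (rule ennreal_add_le)
  also have "\<dots> \<le> exp_hit_time n \<pi> 0 (int n) + exp_hit_time n (mirror \<pi>) 0 (int n)"
  proof (rule add_mono)
    show "ennreal (\<Sum>k\<in>{0..<int n}. up_time n \<pi> k) \<le> exp_hit_time n \<pi> 0 (int n)"
      using up_crossing_bound_up_time[of n \<pi>, OF interior] by (rule up_crossing_sum_le_exp_hit_time)
    show "ennreal (\<Sum>k\<in>{0..<int n}. down_time n \<pi> (- k - 1)) \<le> exp_hit_time n (mirror \<pi>) 0 (int n)"
      using up_crossing_bound_down_time[of n \<pi>, OF interior]
      by (rule reflecting_walk.up_crossing_sum_le_exp_hit_time[OF mirror_walk])
  qed
  finally show ?thesis .
qed

end

section \<open>The degenerate walk\<close>

context reflecting_walk
begin

text \<open>Since \<pi> j = 0 the constraint at j is vacuous, so the crossing bounds that are tight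
  on (j, 0] may be scaled by any C: from 0 the walk is caught below j with positive probability.\<close>
theorem exp_hit_time_eq_top_if_blocked:
  assumes j: "- int n < j" "j < int n" and "\<pi> j = 0"
    and below_one: "\<And>k. j < k \<Longrightarrow> k \<le> 0 \<Longrightarrow> \<pi> k < 1"
  shows "exp_hit_time n \<pi> 0 (int n) = top"
proof (rule ennreal_eq_top_if_unbounded)
  fix C :: real assume "0 \<le> C"
  define m where "m = max j 0"
  define a where "a k = (if j \<le> k \<and> k \<le> m then C * (\<Prod>l\<in>{k<..0}. odds \<pi> l) else 0)" for k
  have "0 \<le> odds \<pi> l" if "j < l" "l \<le> 0" for l
    using prob[of l] below_one[OF that] that j by (simp add: odds_def)
  then have a_nonneg: "0 \<le> a k" for k
    using \<open>0 \<le> C\<close> by (auto simp: a_def intro!: mult_nonneg_nonneg prod_nonneg)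
  have "up_crossing_bound n \<pi> a"
    unfolding up_crossing_bound_def
  proof (intro conjI allI impI)
    show "a (- int n) \<le> 1" using j by (simp add: a_def)
    fix k assume k: "- int n < k \<and> k < int n"
    consider "k = j" | "j < k" "k \<le> m" | "k < j \<or> m < k" by linarith
    then show "\<pi> k * a k \<le> 1 + (1 - \<pi> k) * a (k - 1)"
    proof cases
      case 1
      then show ?thesis using \<open>\<pi> j = 0\<close> by (simp add: a_def)
    next
      case 2
      then have "k \<le> 0" by (auto simp: m_def)
      then have "{k - 1<..0} = insert k {k<..0}" by auto
      then have "a (k - 1) = odds \<pi> k * a k" using 2 by (simp add: a_def)
      then have "(1 - \<pi> k) * a (k - 1) = \<pi> k * a k"
        using below_one[OF \<open>j < k\<close> \<open>k \<le> 0\<close>] by (simp add: odds_def)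
      then show ?thesis by simp
    next
      case 3
      then have "a k = 0" by (auto simp: a_def)
      then show ?thesis using prob[of k] k a_nonneg[of "k - 1"] by simp
    qed
  qed
  then have "ennreal (\<Sum>k\<in>{0..<int n}. a k) \<le> exp_hit_time n \<pi> 0 (int n)"
    by (rule up_crossing_sum_le_exp_hit_time)
  moreover have "C \<le> (\<Sum>k\<in>{0..<int n}. a k)"
  proof -
    have "a m = C" by (simp add: a_def m_def)
    moreover have "m \<in> {0..<int n}" using j by (simp add: m_def)
    ultimately show ?thesis using a_nonneg by (metis finite_atLeastLessThan_int member_le_sum)
  qed
  ultimately show "ennreal C \<le> exp_hit_time n \<pi> 0 (int n)"
    by (meson ennreal_leI order_trans)
qed

lemma exp_hit_time_eq_top_if_degenerate:
  assumes m: "- int n < m" "m < int n" and "\<pi> m = 0"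
  shows "exp_hit_time n \<pi> 0 (int n) = top \<or> exp_hit_time n (mirror \<pi>) 0 (int n) = top"
proof (cases "\<forall>k. m < k \<and> k \<le> 0 \<longrightarrow> \<pi> k < 1")
  case True
  then show ?thesis using exp_hit_time_eq_top_if_blocked[OF m \<open>\<pi> m = 0\<close>] by blast
next
  case False
  then obtain k where k: "m < k" "k \<le> 0" "\<not> \<pi> k < 1" by blast
  then have "mirror \<pi> (- k) = 0" using prob[of k] m by (simp add: mirror_def)
  then have "exp_hit_time n (mirror \<pi>) 0 (int n) = top"
    using k m by (intro reflecting_walk.exp_hit_time_eq_top_if_blocked[OF mirror_walk]) auto
  then show ?thesis ..
qed

theorem exp_hit_times_sum_ge:
  "ennreal (4 * real n ^ 2) \<le> exp_hit_time n \<pi> 0 (int n) + exp_hit_time n \<pi> 0 (- int n)"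
proof -
  have "exp_hit_time n \<pi> 0 (- int n) = exp_hit_time n (mirror \<pi>) 0 (int n)"
    using exp_hit_time_mirror[OF n_pos, of \<pi> 0 "- int n"] by simp
  moreover have "ennreal (4 * real n ^ 2) \<le> exp_hit_time n \<pi> 0 (int n) + exp_hit_time n (mirror \<pi>) 0 (int n)"
  proof (cases "\<forall>k. - int n < k \<and> k < int n \<longrightarrow> 0 < \<pi> k \<and> \<pi> k < 1")
    case True
    then show ?thesis by (intro exp_hit_times_ge_nondegenerate) auto
  next
    case False
    then obtain m where m: "- int n < m" "m < int n" and deg: "\<pi> m = 0 \<or> \<pi> m = 1"
      using prob by force
    from deg have "exp_hit_time n \<pi> 0 (int n) = top \<or> exp_hit_time n (mirror \<pi>) 0 (int n) = top"
    proof
      assume "\<pi> m = 0"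
      with m show ?thesis by (rule exp_hit_time_eq_top_if_degenerate)
    next
      assume "\<pi> m = 1"
      then have "mirror \<pi> (- m) = 0" by (simp add: mirror_def)
      then show ?thesis
        using reflecting_walk.exp_hit_time_eq_top_if_degenerate[OF mirror_walk, of "- m"] m by auto
    qed
    then show ?thesis by auto
  qed
  ultimately show ?thesis by simp
qed

end

theorem corollary1:
  fixes n :: nat and \<pi> :: "int \<Rightarrow> real"
  assumes "n > 0"
    and "\<And>i. - int n < i \<Longrightarrow> i < int n \<Longrightarrow> 0 \<le> \<pi> i \<and> \<pi> i \<le> 1"
  shows "max (exp_hit_time n \<pi> 0 (int n)) (exp_hit_time n \<pi> 0 (- int n))
           \<ge> ennreal (2 / 3 * real n ^ 2)"
proof -
  interpret reflecting_walk n \<pi>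
    using assms by unfold_locales
  have "ennreal (2 * (2 * real n ^ 2)) \<le> exp_hit_time n \<pi> 0 (int n) + exp_hit_time n \<pi> 0 (- int n)"
    using exp_hit_times_sum_ge by simp
  then have "ennreal (2 * real n ^ 2) \<le> max (exp_hit_time n \<pi> 0 (int n)) (exp_hit_time n \<pi> 0 (- int n))"
    by (metis add_mono_ennreal le_max_iff_disj mult_2 linorder_not_le)
  moreover have "ennreal (2 / 3 * real n ^ 2) \<le> ennreal (2 * real n ^ 2)"
    by (intro ennreal_leI) simp
  ultimately show ?thesis by (meson order_trans)
qed

end
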